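(* Let $A=\{a_1,\dots,a_{3k}\}$ be an instance of 3-PARTITION with $a^2$ divisible by $7$, and let $G(A)$ be the bipartite network constructed from $A$ as described in the context. In any division of $G(A)$ with maximal bipartite modularity, every community contains at most one of the bicliques $K_1,\dots,K_k$.
   Context: An instance of 3-PARTITION is a set of $3k$ positive integers $A=\{a_1,\dots,a_{3k}\}$ such that $a=\sum_{i=1}^{3k}a_i=kb$ and $b/4<a_i<b/2$ for all $i$, for some integer $b$. The bipartite network $G(A)$ (vertices colored red/blue, every edge joining a red and a blue vertex) is built as follows. (1) Construct $k$ complete bipartite networks (bicliques) $K_1,\dots,K_k$, each with $a$ red and $a$ blue vertices. (2) For each $i=1,\dots,3k$ add a red vertex $x_i$ and a blue vertex $y_i$ (element vertices). (3) For each $i$, connect $x_i$ to $a_i$ blue vertices in each of the $k$ bicliques, in such a way that each blue vertex of every biclique is adjacent to exactly one red element vertex; similarly connect $y_i$ to $a_i$ red vertices in each biclique so that each red vertex of every biclique is adjacent to exactly one blue element vertex. (4) For each $i$, add the edge $x_iy_i$. (5) For each $i$, construct a star $X_i$ with one blue internal vertex and $a^2/7$ red leaves, and a star $Y_i$ with one red internal vertex and $a^2/7$ blue leaves. (6) For each $i$, connect $x_i$ to the internal vertex of $X_i$ and $y_i$ to the internal vertex of $Y_i$. A division of the vertex set is a partition into communities. With $m$ the number of edges, Barber's bipartite modularity is $Q_b(\mathcal{C})=\sum_{C\in\mathcal{C}}\left(\frac{m_C}{m}-\frac{R_CB_C}{m^2}\right)$, where $m_C$ is the number of edges inside $C$ and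 $R_C$ (resp. $B_C$) is the sum of degrees of red (resp. blue) vertices in $C$. A division with maximal bipartite modularity is one maximizing $Q_b$ over all divisions. A community "contains" a biclique $K_t$ if all vertices of $K_t$ lie in it. *)

theory Defs
  imports Main "HOL.Real"
begin

text \<open>A bipartite network is given by a set of red vertices Rd, a set of blue
vertices Bl and an edge set E of (red, blue) pairs.\<close>

definition degree :: "('v \<times> 'v) set \<Rightarrow> 'v \<Rightarrow> nat" where
  "degree E v = card {e \<in> E. fst e = v \<or> snd e = v}"

definition is_division :: "'v set \<Rightarrow> 'v set set \<Rightarrow> bool" where
  "is_division V P \<longleftrightarrow> \<Union>P = V \<and> (\<forall>C\<in>P. C \<noteq> {}) \<and>
     (\<forall>C\<in>P. \<forall>D\<in>P. C \<noteq> D \<longrightarrow> C \<inter> D = {})"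

definition bip_modularity ::
  "'v set \<Rightarrow> 'v set \<Rightarrow> ('v \<times> 'v) set \<Rightarrow> 'v set set \<Rightarrow> real" where
  "bip_modularity Rd Bl E P =
     (let m = real (card E) in
      \<Sum>C\<in>P. real (card {e \<in> E. fst e \<in> C \<and> snd e \<in> C}) / m
            - (\<Sum>v\<in>C \<inter> Rd. real (degree E v)) * (\<Sum>v\<in>C \<inter> Bl. real (degree E v)) / m^2)"

definition max_modularity_division ::
  "'v set \<Rightarrow> 'v set \<Rightarrow> ('v \<times> 'v) set \<Rightarrow> 'v set set \<Rightarrow> bool" where
  "max_modularity_division Rd Bl E P \<longleftrightarrow>
     is_division (Rd \<union> Bl) P \<and>
     (\<forall>P'. is_division (Rd \<union> Bl) P' \<longrightarrow> bip_modularity Rd Bl E P' \<le> bip_modularity Rd Bl E P)"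

text \<open>The 3k integers are indexed as a 0, ..., a (3k-1).\<close>

definition three_partition_instance :: "nat \<Rightarrow> (nat \<Rightarrow> nat) \<Rightarrow> nat \<Rightarrow> bool" where
  "three_partition_instance k a b \<longleftrightarrow>
     (\<forall>i<3*k. 0 < a i) \<and> (\<Sum>i<3*k. a i) = k * b \<and>
     (\<forall>i<3*k. real b / 4 < real (a i) \<and> real (a i) < real b / 2)"

text \<open>Vertices: KR t j / KB t j are the red / blue vertices j of biclique K_t;
XV i, YV i are the element vertices x_i, y_i; XC i is the (blue) centre of star X_i,
XL i l its red leaves; YC i is the (red) centre of star Y_i, YL i l its blue leaves.\<close>

datatype vtx = KR nat nat | KB nat nat | XV nat | YV nat
  | XC nat | XL nat nat | YC nat | YL nat nat

definition GA_red :: "nat \<Rightarrow> nat \<Rightarrow> nat \<Rightarrow> vtx set" where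
  "GA_red k S L =
     {KR t j |t j. t < k \<and> j < S} \<union> {XV i |i. i < 3*k} \<union>
     {XL i l |i l. i < 3*k \<and> l < L} \<union> {YC i |i. i < 3*k}"

definition GA_blue :: "nat \<Rightarrow> nat \<Rightarrow> nat \<Rightarrow> vtx set" where
  "GA_blue k S L =
     {KB t j |t j. t < k \<and> j < S} \<union> {YV i |i. i < 3*k} \<union>
     {YL i l |i l. i < 3*k \<and> l < L} \<union> {XC i |i. i < 3*k}"

text \<open>f t j is the index i of the red element vertex x_i adjacent to blue vertex KB t j;
g t j is the index i of the blue element vertex y_i adjacent to red vertex KR t j.\<close>

definition GA_edges ::
  "nat \<Rightarrow> nat \<Rightarrow> nat \<Rightarrow> (nat \<Rightarrow> nat \<Rightarrow> nat) \<Rightarrow> (nat \<Rightarrow> nat \<Rightarrow> nat) \<Rightarrow> (vtx \<times> vtx) set" where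
  "GA_edges k S L f g =
     {(KR t j, KB t j') |t j j'. t < k \<and> j < S \<and> j' < S} \<union>
     {(XV (f t j), KB t j) |t j. t < k \<and> j < S} \<union>
     {(KR t j, YV (g t j)) |t j. t < k \<and> j < S} \<union>
     {(XV i, YV i) |i. i < 3*k} \<union>
     {(XV i, XC i) |i. i < 3*k} \<union>
     {(XL i l, XC i) |i l. i < 3*k \<and> l < L} \<union>
     {(YC i, YV i) |i. i < 3*k} \<union>
     {(YC i, YL i l) |i l. i < 3*k \<and> l < L}"

definition valid_attachment :: "nat \<Rightarrow> (nat \<Rightarrow> nat) \<Rightarrow> nat \<Rightarrow> (nat \<Rightarrow> nat \<Rightarrow> nat) \<Rightarrow> bool" where
  "valid_attachment k a S f \<longleftrightarrow>
     (\<forall>t<k. \<forall>j<S. f t j < 3*k) \<and>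
     (\<forall>t<k. \<forall>i<3*k. card {j. j < S \<and> f t j = i} = a i)"

definition biclique_vertices :: "nat \<Rightarrow> nat \<Rightarrow> vtx set" where
  "biclique_vertices S t = {KR t j |j. j < S} \<union> {KB t j |j. j < S}"

end

theory Submission
  imports Defs
begin

(* Write S = a_1 + ... + a_3k, so each biclique has S red and S blue vertices. Suppose a
   community C of an optimal division contains two bicliques, and split D = K_t off C.
   By community_score_split this changes Q_b by
     (R_{C-D} B_D + R_D B_{C-D}) / m^2 - c / m,
   where c counts the edges between D and C - D. Every biclique vertex has degree at least
   S, so each of the four degree sums is at least S^2 and the first term is at least
   2 S^4 / m^2. Only the 2S edges to element vertices leave K_t, so c <= 2S, while the
   stars have only S^2/7 leaves, which keeps m < S^3. Hence the split strictly increases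
   Q_b, contradicting optimality. *)

definition internal_edges :: "('v \<times> 'v) set \<Rightarrow> 'v set \<Rightarrow> ('v \<times> 'v) set" where
  "internal_edges E C = {e \<in> E. fst e \<in> C \<and> snd e \<in> C}"

definition crossing_edges :: "('v \<times> 'v) set \<Rightarrow> 'v set \<Rightarrow> 'v set \<Rightarrow> ('v \<times> 'v) set" where
  "crossing_edges E A B = {e \<in> E. fst e \<in> A \<and> snd e \<in> B \<or> fst e \<in> B \<and> snd e \<in> A}"

definition degree_sum :: "('v \<times> 'v) set \<Rightarrow> 'v set \<Rightarrow> real" where
  "degree_sum E X = (\<Sum>v\<in>X. real (degree E v))"

definition community_score :: "'v set \<Rightarrow> 'v set \<Rightarrow> ('v \<times> 'v) set \<Rightarrow> 'v set \<Rightarrow> real" where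
  "community_score Rd Bl E C =
     real (card (internal_edges E C)) / real (card E)
     - degree_sum E (C \<inter> Rd) * degree_sum E (C \<inter> Bl) / real (card E)^2"

lemma bip_modularity_eq_sum_community_score:
  "bip_modularity Rd Bl E P = (\<Sum>C\<in>P. community_score Rd Bl E C)"
  unfolding bip_modularity_def community_score_def internal_edges_def degree_sum_def Let_def
  by simp

lemma card_internal_edges_split:
  assumes "finite E" "D \<subseteq> C"
  shows "card (internal_edges E C) =
           card (internal_edges E (C - D)) + card (internal_edges E D) + card (crossing_edges E (C - D) D)"
proof -
  have "internal_edges E C = (internal_edges E (C - D) \<union> internal_edges E D) \<union> crossing_edges E (C - D) D"
    using assms(2) unfolding internal_edges_def crossing_edges_def by auto
  moreover have "internal_edges E (C - D) \<inter> internal_edges E D = {}"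
    and "(internal_edges E (C - D) \<union> internal_edges E D) \<inter> crossing_edges E (C - D) D = {}"
    unfolding internal_edges_def crossing_edges_def by auto
  moreover have "finite (internal_edges E X)" "finite (crossing_edges E X Y)" for X Y
    unfolding internal_edges_def crossing_edges_def using assms(1) by simp_all
  ultimately show ?thesis
    by (simp add: card_Un_disjoint)
qed

lemma degree_sum_split:
  assumes "finite C" "D \<subseteq> C"
  shows "degree_sum E (C \<inter> X) = degree_sum E ((C - D) \<inter> X) + degree_sum E (D \<inter> X)"
proof -
  have "C \<inter> X = (C - D) \<inter> X \<union> D \<inter> X" using assms(2) by auto
  moreover have "finite ((C - D) \<inter> X)" "finite (D \<inter> X)"
    using assms finite_subset by auto
  moreover have "(C - D) \<inter> X \<inter> (D \<inter> X) = {}"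
    by blast
  ultimately show ?thesis
    unfolding degree_sum_def by (metis sum.union_disjoint)
qed

lemma community_score_split:
  assumes "finite E" "finite C" "D \<subseteq> C"
  shows "community_score Rd Bl E (C - D) + community_score Rd Bl E D =
           community_score Rd Bl E C
           + (degree_sum E ((C - D) \<inter> Rd) * degree_sum E (D \<inter> Bl)
              + degree_sum E (D \<inter> Rd) * degree_sum E ((C - D) \<inter> Bl)) / real (card E)^2
           - real (card (crossing_edges E (C - D) D)) / real (card E)"
  unfolding community_score_def card_internal_edges_split[OF assms(1,3)]
    degree_sum_split[OF assms(2,3), of _ Rd] degree_sum_split[OF assms(2,3), of _ Bl]
  by (simp only: of_nat_add add_divide_distrib diff_divide_distrib ring_distribs)

lemma is_division_split:
  assumes div: "is_division V P" and C: "C \<in> P" and D: "D \<subseteq> C" "D \<noteq> {}" "C - D \<noteq> {}"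
  shows "is_division V (insert (C - D) (insert D (P - {C})))"
proof -
  let ?P' = "insert (C - D) (insert D (P - {C}))"
  have apart_from_C: "X \<inter> C = {}" if "X \<in> P - {C}" for X
    using div C that unfolding is_division_def by blast
  have "X \<inter> Y = {}" if XY: "X \<in> ?P'" "Y \<in> ?P'" "X \<noteq> Y" for X Y
  proof -
    consider "X \<in> P - {C}" "Y \<in> P - {C}" | "X \<subseteq> C" "Y \<in> P - {C}" | "X \<in> P - {C}" "Y \<subseteq> C"
      | "X \<in> {C - D, D}" "Y \<in> {C - D, D}"
      using XY D by blast
    then show ?thesis
    proof cases
      case 1
      then show ?thesis using div XY(3) unfolding is_division_def by blast
    qed (use XY(3) apart_from_C in blast)+
  qed
  moreover have "\<Union>?P' = \<Union>P" using C D(1) by auto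
  ultimately show ?thesis using div D(2,3) unfolding is_division_def by auto
qed

lemma max_modularity_division_split_bound:
  assumes max: "max_modularity_division Rd Bl E P"
    and fin: "finite Rd" "finite Bl" "finite E" "E \<noteq> {}"
    and C: "C \<in> P" and D: "D \<subseteq> C" "D \<noteq> {}" "C - D \<noteq> {}"
  shows "degree_sum E ((C - D) \<inter> Rd) * degree_sum E (D \<inter> Bl)
           + degree_sum E (D \<inter> Rd) * degree_sum E ((C - D) \<inter> Bl)
         \<le> real (card (crossing_edges E (C - D) D)) * real (card E)"
proof -
  let ?m = "real (card E)"
  let ?w = "degree_sum E ((C - D) \<inter> Rd) * degree_sum E (D \<inter> Bl)
              + degree_sum E (D \<inter> Rd) * degree_sum E ((C - D) \<inter> Bl)"
  let ?c = "real (card (crossing_edges E (C - D) D))"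
  let ?q = "community_score Rd Bl E"
  let ?P' = "insert (C - D) (insert D (P - {C}))"
  have div: "is_division (Rd \<union> Bl) P"
    using max unfolding max_modularity_division_def by blast
  then have "P \<subseteq> Pow (Rd \<union> Bl)"
    and apart_from_C: "\<And>X. X \<in> P \<Longrightarrow> X \<noteq> C \<Longrightarrow> X \<inter> C = {}"
    using C unfolding is_division_def by blast+
  moreover have "finite (Rd \<union> Bl)"
    using fin(1,2) by simp
  ultimately have "finite P"
    by (simp add: finite_subset)
  have "finite C"
    using C \<open>P \<subseteq> Pow (Rd \<union> Bl)\<close> \<open>finite (Rd \<union> Bl)\<close> by (meson PowD finite_subset subsetD)
  have "C - D \<notin> P" and "D \<notin> P" and "C - D \<noteq> D"
    using apart_from_C D by blast+
  then have "(\<Sum>X\<in>?P'. ?q X) = ?q (C - D) + ?q D + (\<Sum>X\<in>P - {C}. ?q X)"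
    using \<open>finite P\<close> by simp
  moreover have "(\<Sum>X\<in>P. ?q X) = ?q C + (\<Sum>X\<in>P - {C}. ?q X)"
    using \<open>finite P\<close> C by (rule sum.remove)
  moreover have "(\<Sum>X\<in>?P'. ?q X) \<le> (\<Sum>X\<in>P. ?q X)"
    using max is_division_split[OF div C D]
    unfolding max_modularity_division_def bip_modularity_eq_sum_community_score by blast
  ultimately have "?w / ?m^2 \<le> ?c / ?m"
    using community_score_split[OF fin(3) \<open>finite C\<close> D(1), of Rd Bl] by linarith
  moreover have "?m > 0"
    using fin(3,4) by (simp add: card_gt_0_iff)
  ultimately have "?w \<le> ?c / ?m * ?m^2"
    by (simp add: pos_divide_le_eq)
  also have "\<dots> = ?c * ?m"
    using \<open>?m > 0\<close> by (simp add: power2_eq_square)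
  finally show ?thesis .
qed

lemma card_le_degree:
  assumes "finite E" "F \<subseteq> E" "\<forall>e\<in>F. fst e = v \<or> snd e = v"
  shows "card F \<le> degree E v"
  unfolding degree_def using assms by (intro card_mono) auto

lemma degree_sum_ge:
  assumes "finite X" "A \<subseteq> X" "\<forall>v\<in>A. d \<le> degree E v"
  shows "real (card A) * real d \<le> degree_sum E X"
proof -
  have "real (card A) * real d = (\<Sum>v\<in>A. real d)"
    by simp
  also have "\<dots> \<le> (\<Sum>v\<in>A. real (degree E v))"
    using assms(3) by (intro sum_mono) simp
  also have "\<dots> \<le> degree_sum E X"
    unfolding degree_sum_def using assms(1,2) by (intro sum_mono2) auto
  finally show ?thesis .
qed

lemma finite_GA_red: "finite (GA_red k S L)"
proof -
  have "GA_red k S L = (\<lambda>(t, j). KR t j) ` ({..<k} \<times> {..<S}) \<union> XV ` {..<3*k}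
      \<union> (\<lambda>(i, l). XL i l) ` ({..<3*k} \<times> {..<L}) \<union> YC ` {..<3*k}"
    unfolding GA_red_def by (auto simp: image_def)
  then show ?thesis by simp
qed

lemma finite_GA_blue: "finite (GA_blue k S L)"
proof -
  have "GA_blue k S L = (\<lambda>(t, j). KB t j) ` ({..<k} \<times> {..<S}) \<union> YV ` {..<3*k}
      \<union> (\<lambda>(i, l). YL i l) ` ({..<3*k} \<times> {..<L}) \<union> XC ` {..<3*k}"
    unfolding GA_blue_def by (auto simp: image_def)
  then show ?thesis by simp
qed

lemma GA_edges_eq_images:
  "GA_edges k S L f g =
     (\<lambda>(t, j, j'). (KR t j, KB t j')) ` ({..<k} \<times> {..<S} \<times> {..<S})
     \<union> (\<lambda>(t, j). (XV (f t j), KB t j)) ` ({..<k} \<times> {..<S})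
     \<union> (\<lambda>(t, j). (KR t j, YV (g t j))) ` ({..<k} \<times> {..<S})
     \<union> (\<lambda>i. (XV i, YV i)) ` {..<3*k}
     \<union> (\<lambda>i. (XV i, XC i)) ` {..<3*k}
     \<union> (\<lambda>(i, l). (XL i l, XC i)) ` ({..<3*k} \<times> {..<L})
     \<union> (\<lambda>i. (YC i, YV i)) ` {..<3*k}
     \<union> (\<lambda>(i, l). (YC i, YL i l)) ` ({..<3*k} \<times> {..<L})"
  unfolding GA_edges_def by (auto simp: image_def)

lemma finite_GA_edges: "finite (GA_edges k S L f g)"
  unfolding GA_edges_eq_images by simp

lemma card_image_le_bound: "finite A \<Longrightarrow> card A \<le> n \<Longrightarrow> card (h ` A) \<le> n"
  using card_image_le order_trans by blast

lemma card_Un_le_add: "card A \<le> n \<Longrightarrow> card B \<le> n' \<Longrightarrow> card (A \<union> B) \<le> n + n'"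
  using card_Un_le[of A B] by linarith

lemma card_GA_edges_le:
  "card (GA_edges k S L f g) \<le> k*S*S + k*S + k*S + 3*k + 3*k + 3*k*L + 3*k + 3*k*L"
  unfolding GA_edges_eq_images
  by (intro card_Un_le_add card_image_le_bound) (simp_all add: card_cartesian_product)

lemma GA_edges_biclique_edge:
  "t < k \<Longrightarrow> j < S \<Longrightarrow> j' < S \<Longrightarrow> (KR t j, KB t j') \<in> GA_edges k S L f g"
  unfolding GA_edges_def by blast

lemma degree_GA_biclique_vertex:
  assumes "t < k" "j < S"
  shows "S \<le> degree (GA_edges k S L f g) (KR t j)" and "S \<le> degree (GA_edges k S L f g) (KB t j)"
proof -
  have "card ((\<lambda>j'. (KR t j, KB t j')) ` {..<S}) \<le> degree (GA_edges k S L f g) (KR t j)"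
    and "card ((\<lambda>j'. (KR t j', KB t j)) ` {..<S}) \<le> degree (GA_edges k S L f g) (KB t j)"
    using assms by (intro card_le_degree finite_GA_edges; auto intro: GA_edges_biclique_edge)+
  then show "S \<le> degree (GA_edges k S L f g) (KR t j)" and "S \<le> degree (GA_edges k S L f g) (KB t j)"
    by (simp_all add: card_image inj_on_def)
qed

lemma degree_sums_ge_biclique:
  assumes "s < k" "biclique_vertices S s \<subseteq> X" "finite X"
  shows "real S * real S \<le> degree_sum (GA_edges k S L f g) (X \<inter> GA_red k S L)"
    and "real S * real S \<le> degree_sum (GA_edges k S L f g) (X \<inter> GA_blue k S L)"
proof -
  have "KR s ` {..<S} \<subseteq> X \<inter> GA_red k S L" and "KB s ` {..<S} \<subseteq> X \<inter> GA_blue k S L"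
    using assms(1,2) unfolding biclique_vertices_def GA_red_def GA_blue_def by blast+
  moreover have "card (KR s ` {..<S}) = S" and "card (KB s ` {..<S}) = S"
    by (simp_all add: card_image inj_on_def)
  moreover have "\<forall>v\<in>KR s ` {..<S}. S \<le> degree (GA_edges k S L f g) v"
    and "\<forall>v\<in>KB s ` {..<S}. S \<le> degree (GA_edges k S L f g) v"
    using assms(1) degree_GA_biclique_vertex by auto
  ultimately show "real S * real S \<le> degree_sum (GA_edges k S L f g) (X \<inter> GA_red k S L)"
    and "real S * real S \<le> degree_sum (GA_edges k S L f g) (X \<inter> GA_blue k S L)"
    using degree_sum_ge assms(3) by (metis finite_Int)+
qed

lemma card_crossing_edges_biclique_le:
  assumes "X \<inter> biclique_vertices S t = {}"
  shows "card (crossing_edges (GA_edges k S L f g) X (biclique_vertices S t)) \<le> 2 * S"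
proof -
  have "crossing_edges (GA_edges k S L f g) X (biclique_vertices S t)
      \<subseteq> (\<lambda>j. (XV (f t j), KB t j)) ` {..<S} \<union> (\<lambda>j. (KR t j, YV (g t j))) ` {..<S}"
    using assms unfolding crossing_edges_def GA_edges_def biclique_vertices_def by auto
  then have "card (crossing_edges (GA_edges k S L f g) X (biclique_vertices S t))
      \<le> card ((\<lambda>j. (XV (f t j), KB t j)) ` {..<S} \<union> (\<lambda>j. (KR t j, YV (g t j))) ` {..<S})"
    by (intro card_mono) simp_all
  also have "\<dots> \<le> S + S"
    by (intro card_Un_le_add card_image_le_bound) simp_all
  finally show ?thesis by simp
qed

lemma three_partition_instance_ge_3:
  assumes "three_partition_instance k a b" "0 < k"
  shows "3 \<le> b"
proof -
  have "0 < a 0" and "real (a 0) < real b / 2"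
    using assms unfolding three_partition_instance_def by auto
  then show ?thesis by linarith
qed

lemma card_GA_edges_lt_cube:
  assumes "0 < k" "3 * k \<le> S" "6 \<le> S" "7 * L \<le> S^2"
  shows "card (GA_edges k S L f g) < S^3"
proof -
  have "6 * (k*S) \<le> k*S*S"
    using mult_le_mono2[OF assms(3), of "k*S"] by linarith
  moreover have "k * 36 \<le> k*S*S"
    using mult_le_mono2[OF mult_le_mono[OF assms(3) assms(3)], of k] by (simp add: mult.assoc)
  moreover have "7 * card (GA_edges k S L f g) \<le> 7 * (k*S*S) + 14 * (k*S) + 63 * k + 6 * k * (7 * L)"
    using card_GA_edges_le[of k S L f g] by linarith
  moreover have "6 * k * (7 * L) \<le> 6 * (k*S*S)"
    using assms(4) by (simp add: power2_eq_square)
  moreover have "21 * (k*S*S) \<le> 7 * S^3"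
    using mult_le_mono1[OF assms(2), of "S*S"] by (simp add: power3_eq_cube mult.assoc)
  (* 7 m <= 13 k S^2 + 14 k S + 63 k < 21 k S^2 <= 7 S^3 *)
  ultimately show ?thesis
    using assms(1) by linarith
qed

lemma max_modularity_division_GA_no_two_bicliques:
  assumes max: "max_modularity_division (GA_red k S L) (GA_blue k S L) (GA_edges k S L f g) P"
    and C: "C \<in> P" and st: "s < k" "t < k" "s \<noteq> t"
    and Ks: "biclique_vertices S s \<subseteq> C" and Kt: "biclique_vertices S t \<subseteq> C"
    and size: "3 * k \<le> S" "6 \<le> S" "7 * L \<le> S^2"
  shows False
proof -
  let ?Rd = "GA_red k S L" and ?Bl = "GA_blue k S L" and ?E = "GA_edges k S L f g"
  define D where "D = biclique_vertices S t"
  let ?w = "degree_sum ?E ((C - D) \<inter> ?Rd) * degree_sum ?E (D \<inter> ?Bl)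
              + degree_sum ?E (D \<inter> ?Rd) * degree_sum ?E ((C - D) \<inter> ?Bl)"
  let ?c = "card (crossing_edges ?E (C - D) D)"
  let ?Y = "real S * real S"
  have "C \<subseteq> ?Rd \<union> ?Bl"
    using max C unfolding max_modularity_division_def is_division_def by blast
  then have "finite C" and "finite D"
    using Kt finite_GA_red finite_GA_blue unfolding D_def by (metis finite_UnI finite_subset)+
  have Ks': "biclique_vertices S s \<subseteq> C - D"
    using Ks st(3) unfolding D_def biclique_vertices_def by blast
  moreover have "KR t 0 \<in> D" and "KR s 0 \<in> biclique_vertices S s"
    using size(2) unfolding D_def biclique_vertices_def by auto
  ultimately have "D \<noteq> {}" and "C - D \<noteq> {}" and "D \<subseteq> C"
    using Kt unfolding D_def by blast+
  have "?E \<noteq> {}"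
    using GA_edges_biclique_edge[OF st(2), of 0 S 0 L f g] size(2) by auto
  have "?Y \<le> degree_sum ?E ((C - D) \<inter> ?Rd)" "?Y \<le> degree_sum ?E ((C - D) \<inter> ?Bl)"
    "?Y \<le> degree_sum ?E (D \<inter> ?Rd)" "?Y \<le> degree_sum ?E (D \<inter> ?Bl)"
    using degree_sums_ge_biclique[OF st(1) Ks'] degree_sums_ge_biclique[OF st(2) order_refl]
      \<open>finite C\<close> \<open>finite D\<close> unfolding D_def by auto
  moreover have "0 \<le> ?Y"
    by simp
  ultimately have "?Y * ?Y + ?Y * ?Y \<le> ?w"
    by (intro add_mono mult_mono; linarith)
  also have "?w \<le> real ?c * real (card ?E)"
    by (rule max_modularity_division_split_bound[OF max finite_GA_red finite_GA_blue finite_GA_edges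
          \<open>?E \<noteq> {}\<close> C \<open>D \<subseteq> C\<close> \<open>D \<noteq> {}\<close> \<open>C - D \<noteq> {}\<close>])
  also have "real ?c * real (card ?E) < real (2 * S * S ^ 3)"
  proof -
    have "?c * card ?E \<le> 2 * S * card ?E"
      unfolding D_def by (intro mult_le_mono1 card_crossing_edges_biclique_le) blast
    also have "\<dots> < 2 * S * S ^ 3"
      using card_GA_edges_lt_cube[OF _ size(1-3)] st(1) size(2) by (intro mult_strict_left_mono) simp_all
    finally show ?thesis
      by (simp only: of_nat_mult[symmetric] of_nat_less_iff)
  qed
  finally show False
    by (simp add: power3_eq_cube)
qed

theorem lemma2:
  fixes k b :: nat and a :: "nat \<Rightarrow> nat" and f g :: "nat \<Rightarrow> nat \<Rightarrow> nat"
    and P :: "vtx set set"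
  assumes inst: "three_partition_instance k a b"
    and div7: "(7::nat) dvd (\<Sum>i<3*k. a i)^2"
    and f: "valid_attachment k a (\<Sum>i<3*k. a i) f"
    and g: "valid_attachment k a (\<Sum>i<3*k. a i) g"
    and maxP: "max_modularity_division
                 (GA_red k (\<Sum>i<3*k. a i) ((\<Sum>i<3*k. a i)^2 div 7))
                 (GA_blue k (\<Sum>i<3*k. a i) ((\<Sum>i<3*k. a i)^2 div 7))
                 (GA_edges k (\<Sum>i<3*k. a i) ((\<Sum>i<3*k. a i)^2 div 7) f g) P"
  shows "\<forall>C\<in>P. card {t. t < k \<and> biclique_vertices (\<Sum>i<3*k. a i) t \<subseteq> C} \<le> 1"
proof (rule ballI, rule ccontr)
  fix C assume C: "C \<in> P"
  define S where "S = (\<Sum>i<3*k. a i)"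
  assume "\<not> card {t. t < k \<and> biclique_vertices (\<Sum>i<3*k. a i) t \<subseteq> C} \<le> 1"
  then obtain s t where st: "s < k" "t < k" "s \<noteq> t"
    and Ks: "biclique_vertices S s \<subseteq> C" and Kt: "biclique_vertices S t \<subseteq> C"
    unfolding S_def by (auto simp: card_le_Suc0_iff_eq)
  then have "2 \<le> k"
    by linarith
  then have "3 \<le> b"
    using inst three_partition_instance_ge_3 by simp
  moreover have "S = k * b"
    using inst unfolding three_partition_instance_def S_def by simp
  ultimately have "3 * k \<le> S" and "6 \<le> S"
    using mult_le_mono[OF \<open>2 \<le> k\<close> \<open>3 \<le> b\<close>] by simp_all
  moreover have "7 * (S^2 div 7) \<le> S^2"
    by (rule times_div_less_eq_dividend)
  ultimately show False
    using max_modularity_division_GA_no_two_bicliques[OF maxP[folded S_def] C st Ks Kt] by blast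
qed

end
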